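(* Let $A$ be a noetherian ring and $M$ a finitely generated $A$-module. For each prime $\mathfrak{p}\subset A$, let an element $s(\mathfrak{p})\in M_{\mathfrak{p}}$ be given, such that whenever $\mathfrak{p}\subset \mathfrak{q}$ are primes we have $s(\mathfrak{p}) = 1\otimes s(\mathfrak{q}) \in A_{\mathfrak{p}}\otimes_{A_{\mathfrak{q}}} M_{\mathfrak{q}} = M_{\mathfrak{p}}$. Then there exists a unique $v\in M$ such that $i_{\mathfrak{p}}(v) = s(\mathfrak{p})$ for each prime $\mathfrak{p}$, where $i_{\mathfrak{p}}: M\to M_{\mathfrak{p}}$, $w\mapsto w/1$, is the localization map. *)

theory Defs
  imports "HOL-Algebra.Algebra"
begin

definition fin_gen_module :: "('a, 'r) ring_scheme \<Rightarrow> ('a, 'b, 'm) module_scheme \<Rightarrow> bool" where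
  "fin_gen_module R M \<longleftrightarrow>
     (\<exists>G \<subseteq> carrier M. finite G \<and>
        (\<forall>x \<in> carrier M. \<exists>c \<in> G \<rightarrow> carrier R. x = (\<Oplus>\<^bsub>M\<^esub> g\<in>G. c g \<odot>\<^bsub>M\<^esub> g)))"

text \<open>Localization of the module M at the multiplicative set S:
  pairs (m, s) standing for m/s, modulo (m,s) ~ (m',s') iff u(s'm - s m') = 0 for some u in S.\<close>
definition loc_rel :: "('a, 'r) ring_scheme \<Rightarrow> ('a, 'b, 'm) module_scheme \<Rightarrow> 'a set \<Rightarrow> (('b \<times> 'a) \<times> ('b \<times> 'a)) set" where
  "loc_rel R M S = {((m, s), (m', s')). m \<in> carrier M \<and> s \<in> S \<and> m' \<in> carrier M \<and> s' \<in> S \<and>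
      (\<exists>u \<in> S. u \<odot>\<^bsub>M\<^esub> ((s' \<odot>\<^bsub>M\<^esub> m) \<ominus>\<^bsub>M\<^esub> (s \<odot>\<^bsub>M\<^esub> m')) = \<zero>\<^bsub>M\<^esub>)}"

definition localization :: "('a, 'r) ring_scheme \<Rightarrow> ('a, 'b, 'm) module_scheme \<Rightarrow> 'a set \<Rightarrow> ('b \<times> 'a) set set" where
  "localization R M P = (carrier M \<times> (carrier R - P)) // loc_rel R M (carrier R - P)"

definition loc_map :: "('a, 'r) ring_scheme \<Rightarrow> ('a, 'b, 'm) module_scheme \<Rightarrow> 'a set \<Rightarrow> 'b \<Rightarrow> ('b \<times> 'a) set" where
  "loc_map R M P w = loc_rel R M (carrier R - P) `` {(w, \<one>\<^bsub>R\<^esub>)}"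

text \<open>For P \<subseteq> Q, the canonical map M_Q \<rightarrow> M_P = A_P \<otimes>_{A_Q} M_Q, x \<mapsto> 1 \<otimes> x,
  i.e. m/s \<mapsto> m/s: a class of M_Q is sent to the class in M_P of any representative.\<close>
definition loc_restrict :: "('a, 'r) ring_scheme \<Rightarrow> ('a, 'b, 'm) module_scheme \<Rightarrow> 'a set \<Rightarrow> ('b \<times> 'a) set \<Rightarrow> ('b \<times> 'a) set" where
  "loc_restrict R M P c = loc_rel R M (carrier R - P) `` c"

end

theory Submission
  imports Defs
begin

text \<open>Write \<open>s(P) = x\<^sub>P / t\<^sub>P\<close>. Uniqueness: an element of \<open>M\<close> that vanishes in every
  \<open>M\<^sub>P\<close> has an annihilator contained in no prime ideal, so it is \<open>0\<close>. Existence: let \<open>J\<close> be the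
  ideal of those \<open>a\<close> for which the family \<open>a s(P)\<close> comes from a single element of \<open>M\<close>; it
  suffices that \<open>J\<close> lies in no prime \<open>m\<close>. As \<open>A\<close> is noetherian and \<open>M\<close> finitely generated,
  \<open>M\<close> has finitely many associated primes, and an element vanishes in \<open>M\<^sub>p\<close> as soon as it
  vanishes in \<open>M\<^sub>Q\<close> for all associated primes \<open>Q \<subseteq> p\<close>. Comparing \<open>s(m)\<close> and \<open>s(P)\<close> at an
  associated prime below both shows that for each associated prime \<open>P\<close> some \<open>b\<^sub>P \<notin> m\<close> kills
  \<open>t\<^sub>P x\<^sub>m - t\<^sub>m x\<^sub>P\<close> in \<open>M\<^sub>P\<close>. For the product \<open>b\<close> of the \<open>b\<^sub>P\<close>, the element \<open>b x\<^sub>m\<close> then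
  shows \<open>b t\<^sub>m \<in> J\<close>, while \<open>b t\<^sub>m \<notin> m\<close>.\<close>

section \<open>Ideals and multiplicative subsets\<close>

lemma (in noetherian_ring) ideal_family_has_maximal:
  assumes "Is \<noteq> {}" and "\<And>I. I \<in> Is \<Longrightarrow> ideal I R"
  shows "\<exists>I\<in>Is. \<forall>J\<in>Is. I \<subseteq> J \<longrightarrow> J = I"
proof (rule subset_Zorn)
  fix C assume C: "subset.chain Is C"
  show "\<exists>U\<in>Is. \<forall>Y\<in>C. Y \<subseteq> U"
  proof (cases "C = {}")
    case True
    then show ?thesis using assms(1) by auto
  next
    case False
    have "subset.chain {I. ideal I R} C"
      using C assms(2) unfolding subset.chain_def by auto
    then have "\<Union>C \<in> C" using ideal_chain_is_trivial[OF False] by blast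
    then show ?thesis using C unfolding subset.chain_def by auto
  qed
qed

lemma (in noetherian_ring) ideal_family_has_maximal_image:
  assumes "A \<noteq> {}" and "\<And>a. a \<in> A \<Longrightarrow> ideal (f a) R"
  shows "\<exists>a\<in>A. \<forall>b\<in>A. f a \<subseteq> f b \<longrightarrow> f b = f a"
proof -
  have "\<exists>I\<in>f ` A. \<forall>J\<in>f ` A. I \<subseteq> J \<longrightarrow> J = I"
    using ideal_family_has_maximal[of "f ` A"] assms by blast
  then show ?thesis by (auto dest: bex_imageD)
qed

lemma (in cring) cring_idealI:
  assumes sub: "I \<subseteq> carrier R" and zero: "\<zero> \<in> I"
    and add: "\<And>a b. a \<in> I \<Longrightarrow> b \<in> I \<Longrightarrow> a \<oplus> b \<in> I"
    and mult: "\<And>r a. r \<in> carrier R \<Longrightarrow> a \<in> I \<Longrightarrow> r \<otimes> a \<in> I"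
  shows "ideal I R"
proof (rule idealI)
  show "subgroup I (add_monoid R)"
  proof (rule add.subgroupI)
    show "I \<subseteq> carrier R" and "I \<noteq> {}" using sub zero by auto
    fix a assume a: "a \<in> I"
    then have "\<ominus> a = (\<ominus> \<one>) \<otimes> a" using sub by (simp add: l_minus subsetD)
    then show "\<ominus> a \<in> I" using mult[of "\<ominus> \<one>" a] a by simp
  next
    fix a b assume "a \<in> I" "b \<in> I"
    then show "a \<oplus> b \<in> I" by (rule add)
  qed
  fix a x assume a: "a \<in> I" and x: "x \<in> carrier R"
  show "x \<otimes> a \<in> I" using mult[OF x a] .
  then show "a \<otimes> x \<in> I" using m_comm[of a x] a x sub by auto
qed (rule ring_axioms)

lemma (in cring) ex_primeideal_superset:
  assumes noeth: "noetherian_ring R" and I: "ideal I R" and one: "\<one> \<notin> I"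
  shows "\<exists>P. primeideal P R \<and> I \<subseteq> P"
proof -
  define Fam where "Fam = {J. ideal J R \<and> I \<subseteq> J \<and> \<one> \<notin> J}"
  have "I \<in> Fam" unfolding Fam_def using I one by blast
  then obtain J where J: "J \<in> Fam" and Jmax: "\<forall>J'\<in>Fam. J \<subseteq> J' \<longrightarrow> J' = J"
    using noetherian_ring.ideal_family_has_maximal[OF noeth, of Fam] unfolding Fam_def by blast
  have "maximalideal J R"
  proof (rule maximalidealI)
    show "ideal J R" using J unfolding Fam_def by blast
    show "carrier R \<noteq> J" using J unfolding Fam_def by blast
    fix J' assume J': "ideal J' R" "J \<subseteq> J'" "J' \<subseteq> carrier R"
    show "J' = J \<or> J' = carrier R"
    proof (cases "\<one> \<in> J'")
      case True
      then show ?thesis using ideal.one_imp_carrier[OF J'(1)] by blast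
    next
      case False
      then have "J' \<in> Fam" using J J' unfolding Fam_def by blast
      then show ?thesis using Jmax J'(2) by blast
    qed
  qed
  then have "primeideal J R" by (rule maximalideal_prime)
  then show ?thesis using J unfolding Fam_def by blast
qed

definition multiplicative_subset :: "('a, 'r) ring_scheme \<Rightarrow> 'a set \<Rightarrow> bool" where
  "multiplicative_subset R T \<longleftrightarrow>
     T \<subseteq> carrier R \<and> \<one>\<^bsub>R\<^esub> \<in> T \<and> (\<forall>a\<in>T. \<forall>b\<in>T. a \<otimes>\<^bsub>R\<^esub> b \<in> T)"

lemma (in cring) primeideal_compl_multiplicative:
  assumes "primeideal P R"
  shows "multiplicative_subset R (carrier R - P)"
proof -
  have "\<one> \<notin> P"
    using primeideal.I_notcarr[OF assms] ideal.one_imp_carrier[OF primeideal.axioms(1)[OF assms]]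
    by blast
  moreover have "a \<otimes> b \<notin> P" if "a \<in> carrier R - P" "b \<in> carrier R - P" for a b
    using primeideal.I_prime[OF assms] that by blast
  ultimately show ?thesis unfolding multiplicative_subset_def by auto
qed

lemma (in cring) multiplicative_subset_products:
  assumes S: "multiplicative_subset R S" and T: "multiplicative_subset R T"
  shows "multiplicative_subset R {a \<otimes> b | a b. a \<in> S \<and> b \<in> T}"
proof -
  have SR: "S \<subseteq> carrier R" and TR: "T \<subseteq> carrier R"
    using S T unfolding multiplicative_subset_def by auto
  have "(a \<otimes> b) \<otimes> (a' \<otimes> b') = (a \<otimes> a') \<otimes> (b \<otimes> b')"
    if "a \<in> S" "b \<in> T" "a' \<in> S" "b' \<in> T" for a b a' b'
    using that SR TR by (simp add: m_ac subsetD)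
  moreover have "\<one> = \<one> \<otimes> \<one>" by simp
  ultimately show ?thesis
    using S T SR TR unfolding multiplicative_subset_def by blast
qed

lemma (in cring) subset_Int_if_disjoint_compl_products:
  assumes P: "primeideal P R" and m: "primeideal m R" and QR: "Q \<subseteq> carrier R"
    and disj: "Q \<inter> {a \<otimes> c | a c. a \<in> carrier R - P \<and> c \<in> carrier R - m} = {}"
  shows "Q \<subseteq> P \<inter> m"
proof
  fix q assume q: "q \<in> Q"
  then have qR: "q \<in> carrier R" using QR by blast
  have one: "\<one> \<in> carrier R - P" "\<one> \<in> carrier R - m"
    using primeideal_compl_multiplicative P m unfolding multiplicative_subset_def by auto
  have "q \<otimes> \<one> \<notin> {a \<otimes> c | a c. a \<in> carrier R - P \<and> c \<in> carrier R - m}"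
    and "\<one> \<otimes> q \<notin> {a \<otimes> c | a c. a \<in> carrier R - P \<and> c \<in> carrier R - m}"
    using disj q qR by auto
  then show "q \<in> P \<inter> m" using qR one by blast
qed

lemma (in cring) ex_common_factor_notin_primeideal:
  assumes m: "primeideal m R" and "finite F"
    and ex: "\<And>P. P \<in> F \<Longrightarrow> \<exists>b\<in>carrier R - m. G b P"
    and mult: "\<And>b c P. P \<in> F \<Longrightarrow> G b P \<Longrightarrow> b \<in> carrier R \<Longrightarrow> c \<in> carrier R \<Longrightarrow> G (c \<otimes> b) P"
  shows "\<exists>b\<in>carrier R - m. \<forall>P\<in>F. G b P"
proof -
  have compl: "multiplicative_subset R (carrier R - m)" by (rule primeideal_compl_multiplicative[OF m])
  have "\<exists>b\<in>carrier R - m. \<forall>P\<in>F'. G b P" if "F' \<subseteq> F" for F'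
    using finite_subset[OF that \<open>finite F\<close>] that
  proof (induction F' rule: finite_induct)
    case empty
    have "\<one> \<in> carrier R - m" using compl unfolding multiplicative_subset_def by blast
    then show ?case by blast
  next
    case (insert P F')
    obtain b where b: "b \<in> carrier R - m" "\<forall>P\<in>F'. G b P" using insert.IH insert.prems by blast
    obtain c where c: "c \<in> carrier R - m" "G c P" using ex insert.prems by blast
    have bc: "b \<otimes> c = c \<otimes> b" using b c m_comm by blast
    have "G (b \<otimes> c) P" using mult[OF _ c(2), of b] b c insert.prems by blast
    moreover have "G (b \<otimes> c) P'" if "P' \<in> F'" for P'
      using mult[of P' b c] b c that insert.prems unfolding bc by blast
    moreover have "b \<otimes> c \<in> carrier R - m"
      using b c compl unfolding multiplicative_subset_def by blast
    ultimately show ?case by blast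
  qed
  then show ?thesis by blast
qed

section \<open>Colon ideals and associated primes\<close>

definition colon :: "('a, 'r) ring_scheme \<Rightarrow> ('a, 'b, 'm) module_scheme \<Rightarrow> 'b set \<Rightarrow> 'b \<Rightarrow> 'a set"
  where "colon R M N z = {a \<in> carrier R. a \<odot>\<^bsub>M\<^esub> z \<in> N}"

text \<open>The associated primes of \<open>M/N\<close>.\<close>
definition ass_primes :: "('a, 'r) ring_scheme \<Rightarrow> ('a, 'b, 'm) module_scheme \<Rightarrow> 'b set \<Rightarrow> 'a set set"
  where "ass_primes R M N = {Q. primeideal Q R \<and> (\<exists>z\<in>carrier M. Q = colon R M N z)}"

context module
begin

lemma submodule_zero_closed:
  assumes "submodule N R M"
  shows "\<zero>\<^bsub>M\<^esub> \<in> N"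
proof -
  have "\<one>\<^bsub>add_monoid M\<^esub> \<in> N" by (rule subgroup.one_closed[OF submodule.axioms(1)[OF assms]])
  then show ?thesis by simp
qed

lemma zero_submodule: "submodule {\<zero>\<^bsub>M\<^esub>} R M"
  by (rule submoduleI) auto

lemma colon_ideal:
  assumes N: "submodule N R M" and z: "z \<in> carrier M"
  shows "ideal (colon R M N z) R"
proof (rule cring_idealI)
  show "colon R M N z \<subseteq> carrier R" unfolding colon_def by blast
  show "\<zero> \<in> colon R M N z"
    using z submodule_zero_closed[OF N] unfolding colon_def by simp
  fix a b assume "a \<in> colon R M N z" "b \<in> colon R M N z"
  then show "a \<oplus> b \<in> colon R M N z"
    using z submoduleE(5)[OF N] unfolding colon_def by (simp add: smult_l_distr)
next
  fix r a assume "r \<in> carrier R" "a \<in> colon R M N z"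
  then show "r \<otimes> a \<in> colon R M N z"
    using z submoduleE(4)[OF N] unfolding colon_def by (simp add: smult_assoc1)
qed

lemma colon_smult:
  assumes "c \<in> carrier R" and "z \<in> carrier M"
  shows "colon R M N (c \<odot>\<^bsub>M\<^esub> z) = {a \<in> carrier R. a \<otimes> c \<in> colon R M N z}"
  using assms unfolding colon_def by (auto simp: smult_assoc1)

lemma colon_subset_colon_smult:
  assumes "submodule N R M" and c: "c \<in> carrier R" and z: "z \<in> carrier M"
  shows "colon R M N z \<subseteq> colon R M N (c \<odot>\<^bsub>M\<^esub> z)"
proof
  fix a assume a: "a \<in> colon R M N z"
  then have aR: "a \<in> carrier R" and az: "a \<odot>\<^bsub>M\<^esub> z \<in> N" unfolding colon_def by auto
  have "(a \<otimes> c) \<odot>\<^bsub>M\<^esub> z = c \<odot>\<^bsub>M\<^esub> (a \<odot>\<^bsub>M\<^esub> z)"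
    using aR c z m_comm[of a c] by (simp add: smult_assoc1)
  then have "a \<otimes> c \<in> colon R M N z"
    using aR c az submoduleE(4)[OF assms(1)] unfolding colon_def by simp
  then show "a \<in> colon R M N (c \<odot>\<^bsub>M\<^esub> z)"
    using aR unfolding colon_smult[OF c z] by blast
qed

lemma colon_smult_primeideal:
  assumes Q: "primeideal (colon R M N z) R" and c: "c \<in> carrier R - colon R M N z"
    and z: "z \<in> carrier M"
  shows "colon R M N (c \<odot>\<^bsub>M\<^esub> z) = colon R M N z"
proof -
  have "a \<otimes> c \<in> colon R M N z \<longleftrightarrow> a \<in> colon R M N z" if "a \<in> carrier R" for a
    using primeideal.I_prime[OF Q that] c that primeideal.axioms(1)[OF Q]
    by (auto intro: ideal.I_r_closed)
  moreover have "colon R M N z \<subseteq> carrier R" unfolding colon_def by blast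
  ultimately show ?thesis using c z by (auto simp: colon_smult)
qed

lemma colon_maximal_imp_primeideal:
  assumes N: "submodule N R M" and T: "multiplicative_subset R T" and z: "z \<in> carrier M"
    and disj: "colon R M N z \<inter> T = {}"
    and max: "\<And>c. c \<in> carrier R \<Longrightarrow> colon R M N (c \<odot>\<^bsub>M\<^esub> z) \<inter> T = {} \<Longrightarrow>
                colon R M N (c \<odot>\<^bsub>M\<^esub> z) = colon R M N z"
  shows "primeideal (colon R M N z) R"
proof (rule primeidealI)
  let ?Q = "colon R M N z"
  show "ideal ?Q R" using colon_ideal[OF N z] .
  show "cring R" by (rule is_cring)
  show "carrier R \<noteq> ?Q" using T disj unfolding multiplicative_subset_def by blast
  have TR: "T \<subseteq> carrier R" and Tmult: "\<And>a b. a \<in> T \<Longrightarrow> b \<in> T \<Longrightarrow> a \<otimes> b \<in> T"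
    using T unfolding multiplicative_subset_def by auto
  fix a b assume a: "a \<in> carrier R" and b: "b \<in> carrier R" and ab: "a \<otimes> b \<in> ?Q"
  show "a \<in> ?Q \<or> b \<in> ?Q"
  proof (cases "colon R M N (a \<odot>\<^bsub>M\<^esub> z) \<inter> T = {}")
    case True
    have "b \<in> colon R M N (a \<odot>\<^bsub>M\<^esub> z)"
      using ab a b z by (simp add: colon_smult m_comm)
    then show ?thesis using max[OF a True] by blast
  next
    case False
    then obtain w where w: "w \<in> T" "w \<otimes> a \<in> ?Q"
      using a z by (auto simp: colon_smult)
    have wR: "w \<in> carrier R" using w TR by blast
    have "colon R M N (w \<odot>\<^bsub>M\<^esub> z) \<inter> T = {}"
    proof (rule ccontr)
      assume "colon R M N (w \<odot>\<^bsub>M\<^esub> z) \<inter> T \<noteq> {}"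
      then obtain v where "v \<in> T" "v \<otimes> w \<in> ?Q" using wR z by (auto simp: colon_smult)
      then show False using disj Tmult[of v w] w by blast
    qed
    moreover have "a \<in> colon R M N (w \<odot>\<^bsub>M\<^esub> z)"
      using w a wR z by (simp add: colon_smult m_comm)
    ultimately show ?thesis using max[OF wR] by blast
  qed
qed

lemma ex_ass_prime_disjoint:
  assumes noeth: "noetherian_ring R" and N: "submodule N R M" and T: "multiplicative_subset R T"
    and y: "y \<in> carrier M" and disj: "colon R M N y \<inter> T = {}"
  shows "\<exists>Q\<in>ass_primes R M N. Q \<inter> T = {} \<and> colon R M N y \<subseteq> Q"
proof -
  define A where "A = {r \<in> carrier R. colon R M N (r \<odot>\<^bsub>M\<^esub> y) \<inter> T = {}}"
  have "\<one> \<in> A" unfolding A_def using disj y by simp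
  then have nonempty: "A \<noteq> {}" by blast
  have ideals: "\<And>r. r \<in> A \<Longrightarrow> ideal (colon R M N (r \<odot>\<^bsub>M\<^esub> y)) R"
    unfolding A_def using colon_ideal[OF N] y by simp
  obtain r where "r \<in> A"
    and max: "\<forall>c\<in>A. colon R M N (r \<odot>\<^bsub>M\<^esub> y) \<subseteq> colon R M N (c \<odot>\<^bsub>M\<^esub> y) \<longrightarrow>
      colon R M N (c \<odot>\<^bsub>M\<^esub> y) = colon R M N (r \<odot>\<^bsub>M\<^esub> y)"
    using noetherian_ring.ideal_family_has_maximal_image[OF noeth nonempty,
        where f = "\<lambda>r. colon R M N (r \<odot>\<^bsub>M\<^esub> y)"] ideals by blast
  then have r: "r \<in> carrier R" and disj_r: "colon R M N (r \<odot>\<^bsub>M\<^esub> y) \<inter> T = {}"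
    unfolding A_def by auto
  have ry: "r \<odot>\<^bsub>M\<^esub> y \<in> carrier M" using r y by simp
  have "primeideal (colon R M N (r \<odot>\<^bsub>M\<^esub> y)) R"
  proof (rule colon_maximal_imp_primeideal[OF N T ry disj_r])
    fix c assume c: "c \<in> carrier R" and disj_c: "colon R M N (c \<odot>\<^bsub>M\<^esub> (r \<odot>\<^bsub>M\<^esub> y)) \<inter> T = {}"
    have cr: "c \<odot>\<^bsub>M\<^esub> (r \<odot>\<^bsub>M\<^esub> y) = (c \<otimes> r) \<odot>\<^bsub>M\<^esub> y" using c r y by (simp add: smult_assoc1)
    then have "c \<otimes> r \<in> A" unfolding A_def using c r disj_c by simp
    then show "colon R M N (c \<odot>\<^bsub>M\<^esub> (r \<odot>\<^bsub>M\<^esub> y)) = colon R M N (r \<odot>\<^bsub>M\<^esub> y)"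
      using max colon_subset_colon_smult[OF N c ry] unfolding cr by blast
  qed
  then show ?thesis
    using ry disj_r colon_subset_colon_smult[OF N r y] unfolding ass_primes_def by blast
qed

end

section \<open>Submodules of finitely generated modules\<close>

inductive_set gen_submodule :: "('a, 'r) ring_scheme \<Rightarrow> ('a, 'b, 'm) module_scheme \<Rightarrow> 'b set \<Rightarrow> 'b set"
  for R M G where
  gen_zero: "\<zero>\<^bsub>M\<^esub> \<in> gen_submodule R M G"
| gen_incl: "g \<in> G \<Longrightarrow> g \<in> gen_submodule R M G"
| gen_add: "a \<in> gen_submodule R M G \<Longrightarrow> b \<in> gen_submodule R M G \<Longrightarrow> a \<oplus>\<^bsub>M\<^esub> b \<in> gen_submodule R M G"
| gen_smult: "r \<in> carrier R \<Longrightarrow> a \<in> gen_submodule R M G \<Longrightarrow> r \<odot>\<^bsub>M\<^esub> a \<in> gen_submodule R M G"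

definition coeff_ideal ::
  "('a, 'r) ring_scheme \<Rightarrow> ('a, 'b, 'm) module_scheme \<Rightarrow> 'b set \<Rightarrow> 'b \<Rightarrow> 'b set \<Rightarrow> 'a set"
  where "coeff_ideal R M G g N =
    {r \<in> carrier R. \<exists>w\<in>gen_submodule R M G. r \<odot>\<^bsub>M\<^esub> g \<oplus>\<^bsub>M\<^esub> w \<in> N}"

context module
begin

lemma submodule_Int:
  assumes "submodule A R M" and "submodule B R M"
  shows "submodule (A \<inter> B) R M"
  using submoduleE[OF assms(1)] submoduleE[OF assms(2)] submodule_zero_closed[OF assms(1)]
    submodule_zero_closed[OF assms(2)]
  by (intro submoduleI) auto

lemma gen_submodule_carrier:
  assumes "G \<subseteq> carrier M"
  shows "gen_submodule R M G \<subseteq> carrier M"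
proof
  fix x assume "x \<in> gen_submodule R M G"
  then show "x \<in> carrier M" by induction (use assms in auto)
qed

lemma gen_submodule_is_submodule:
  assumes G: "G \<subseteq> carrier M"
  shows "submodule (gen_submodule R M G) R M"
proof (rule submoduleI)
  fix a assume a: "a \<in> gen_submodule R M G"
  have "(\<ominus> \<one>) \<odot>\<^bsub>M\<^esub> a = \<ominus>\<^bsub>M\<^esub> a"
    using a gen_submodule_carrier[OF G] by (auto simp: smult_l_minus)
  then show "\<ominus>\<^bsub>M\<^esub> a \<in> gen_submodule R M G" using gen_smult[OF _ a, of "\<ominus> \<one>"] by simp
qed (use gen_submodule_carrier[OF G] in \<open>auto intro: gen_submodule.intros\<close>)

lemma gen_submodule_empty: "gen_submodule R M {} = {\<zero>\<^bsub>M\<^esub>}"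
proof
  show "gen_submodule R M {} \<subseteq> {\<zero>\<^bsub>M\<^esub>}"
  proof
    fix x assume "x \<in> gen_submodule R M {}"
    then show "x \<in> {\<zero>\<^bsub>M\<^esub>}" by induction auto
  qed
qed (auto intro: gen_zero)

lemma gen_submodule_insert:
  assumes G: "G \<subseteq> carrier M" and g: "g \<in> carrier M" and x: "x \<in> gen_submodule R M (insert g G)"
  shows "\<exists>r\<in>carrier R. \<exists>w\<in>gen_submodule R M G. x = r \<odot>\<^bsub>M\<^esub> g \<oplus>\<^bsub>M\<^esub> w"
  using x
proof induction
  case gen_zero
  show ?case using g by (intro bexI[of _ \<zero>] bexI[of _ "\<zero>\<^bsub>M\<^esub>"]) (auto intro: gen_submodule.gen_zero)
next
  case (gen_incl h)
  show ?case
  proof (cases "h = g")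
    case True
    then show ?thesis using g by (intro bexI[of _ \<one>] bexI[of _ "\<zero>\<^bsub>M\<^esub>"]) (auto intro: gen_submodule.gen_zero)
  next
    case False
    then have "h \<in> G" using gen_incl by simp
    then show ?thesis using g G by (intro bexI[of _ \<zero>] bexI[of _ h]) (auto intro: gen_submodule.gen_incl)
  qed
next
  case (gen_add a b)
  then obtain r1 w1 r2 w2 where r: "r1 \<in> carrier R" "w1 \<in> gen_submodule R M G" "a = r1 \<odot>\<^bsub>M\<^esub> g \<oplus>\<^bsub>M\<^esub> w1"
    "r2 \<in> carrier R" "w2 \<in> gen_submodule R M G" "b = r2 \<odot>\<^bsub>M\<^esub> g \<oplus>\<^bsub>M\<^esub> w2"
    by blast
  have "w1 \<in> carrier M" "w2 \<in> carrier M" using r gen_submodule_carrier[OF G] by auto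
  then have "a \<oplus>\<^bsub>M\<^esub> b = (r1 \<oplus> r2) \<odot>\<^bsub>M\<^esub> g \<oplus>\<^bsub>M\<^esub> (w1 \<oplus>\<^bsub>M\<^esub> w2)"
    using r g by (simp add: smult_l_distr M.a_ac)
  then show ?case using r by (intro bexI[of _ "r1 \<oplus> r2"] bexI[of _ "w1 \<oplus>\<^bsub>M\<^esub> w2"]) (auto intro: gen_submodule.gen_add)
next
  case (gen_smult c a)
  then obtain r w where r: "r \<in> carrier R" "w \<in> gen_submodule R M G" "a = r \<odot>\<^bsub>M\<^esub> g \<oplus>\<^bsub>M\<^esub> w"
    by blast
  have "w \<in> carrier M" using r gen_submodule_carrier[OF G] by auto
  then have "c \<odot>\<^bsub>M\<^esub> a = (c \<otimes> r) \<odot>\<^bsub>M\<^esub> g \<oplus>\<^bsub>M\<^esub> (c \<odot>\<^bsub>M\<^esub> w)"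
    using r g gen_smult by (simp add: smult_r_distr smult_assoc1)
  then show ?case
    using r gen_smult by (intro bexI[of _ "c \<otimes> r"] bexI[of _ "c \<odot>\<^bsub>M\<^esub> w"]) (auto intro: gen_submodule.gen_smult)
qed

lemma finsum_in_gen_submodule:
  assumes "finite H" and "H \<subseteq> G" and "G \<subseteq> carrier M" and "c \<in> H \<rightarrow> carrier R"
  shows "(\<Oplus>\<^bsub>M\<^esub> g\<in>H. c g \<odot>\<^bsub>M\<^esub> g) \<in> gen_submodule R M G"
  using assms
proof (induction H rule: finite_induct)
  case empty
  then show ?case by (simp add: gen_zero)
next
  case (insert h H)
  then have "(\<Oplus>\<^bsub>M\<^esub> g\<in>insert h H. c g \<odot>\<^bsub>M\<^esub> g) = c h \<odot>\<^bsub>M\<^esub> h \<oplus>\<^bsub>M\<^esub> (\<Oplus>\<^bsub>M\<^esub> g\<in>H. c g \<odot>\<^bsub>M\<^esub> g)"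
    by (intro M.finsum_insert) auto
  moreover have "c h \<odot>\<^bsub>M\<^esub> h \<in> gen_submodule R M G" using insert by (intro gen_smult gen_incl) auto
  ultimately show ?case using insert by (simp add: gen_add)
qed

lemma fin_gen_module_imp_gen_submodule:
  assumes "fin_gen_module R M"
  obtains G where "finite G" and "G \<subseteq> carrier M" and "gen_submodule R M G = carrier M"
proof -
  obtain G where G: "G \<subseteq> carrier M" "finite G"
    and gen: "\<And>x. x \<in> carrier M \<Longrightarrow> \<exists>c \<in> G \<rightarrow> carrier R. x = (\<Oplus>\<^bsub>M\<^esub> g\<in>G. c g \<odot>\<^bsub>M\<^esub> g)"
    using assms unfolding fin_gen_module_def by blast
  have "carrier M \<subseteq> gen_submodule R M G"
  proof
    fix x assume "x \<in> carrier M"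
    then obtain c where "c \<in> G \<rightarrow> carrier R" "x = (\<Oplus>\<^bsub>M\<^esub> g\<in>G. c g \<odot>\<^bsub>M\<^esub> g)" using gen by blast
    then show "x \<in> gen_submodule R M G" using finsum_in_gen_submodule[OF G(2) order_refl G(1)] by simp
  qed
  then show ?thesis using that G gen_submodule_carrier[OF G(1)] by blast
qed

lemma coeff_ideal_ideal:
  assumes G: "G \<subseteq> carrier M" and g: "g \<in> carrier M" and N: "submodule N R M"
  shows "ideal (coeff_ideal R M G g N) R"
proof (rule cring_idealI)
  show "coeff_ideal R M G g N \<subseteq> carrier R" unfolding coeff_ideal_def by blast
  show "\<zero> \<in> coeff_ideal R M G g N"
    unfolding coeff_ideal_def using g submodule_zero_closed[OF N]
    by (auto intro!: bexI[of _ "\<zero>\<^bsub>M\<^esub>"] gen_zero)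
next
  fix a b assume "a \<in> coeff_ideal R M G g N" "b \<in> coeff_ideal R M G g N"
  then obtain w1 w2 where w: "a \<in> carrier R" "w1 \<in> gen_submodule R M G" "a \<odot>\<^bsub>M\<^esub> g \<oplus>\<^bsub>M\<^esub> w1 \<in> N"
    "b \<in> carrier R" "w2 \<in> gen_submodule R M G" "b \<odot>\<^bsub>M\<^esub> g \<oplus>\<^bsub>M\<^esub> w2 \<in> N"
    unfolding coeff_ideal_def by blast
  have "w1 \<in> carrier M" "w2 \<in> carrier M" using w gen_submodule_carrier[OF G] by auto
  then have "(a \<odot>\<^bsub>M\<^esub> g \<oplus>\<^bsub>M\<^esub> w1) \<oplus>\<^bsub>M\<^esub> (b \<odot>\<^bsub>M\<^esub> g \<oplus>\<^bsub>M\<^esub> w2)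
      = (a \<oplus> b) \<odot>\<^bsub>M\<^esub> g \<oplus>\<^bsub>M\<^esub> (w1 \<oplus>\<^bsub>M\<^esub> w2)"
    using w g by (simp add: smult_l_distr M.a_ac)
  moreover have "(a \<odot>\<^bsub>M\<^esub> g \<oplus>\<^bsub>M\<^esub> w1) \<oplus>\<^bsub>M\<^esub> (b \<odot>\<^bsub>M\<^esub> g \<oplus>\<^bsub>M\<^esub> w2) \<in> N"
    using submoduleE(5)[OF N] w by blast
  ultimately show "a \<oplus> b \<in> coeff_ideal R M G g N"
    unfolding coeff_ideal_def using w by (auto intro!: bexI[of _ "w1 \<oplus>\<^bsub>M\<^esub> w2"] gen_add)
next
  fix c a assume c: "c \<in> carrier R" and "a \<in> coeff_ideal R M G g N"
  then obtain w where w: "a \<in> carrier R" "w \<in> gen_submodule R M G" "a \<odot>\<^bsub>M\<^esub> g \<oplus>\<^bsub>M\<^esub> w \<in> N"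
    unfolding coeff_ideal_def by blast
  have "w \<in> carrier M" using w gen_submodule_carrier[OF G] by auto
  then have "c \<odot>\<^bsub>M\<^esub> (a \<odot>\<^bsub>M\<^esub> g \<oplus>\<^bsub>M\<^esub> w) = (c \<otimes> a) \<odot>\<^bsub>M\<^esub> g \<oplus>\<^bsub>M\<^esub> c \<odot>\<^bsub>M\<^esub> w"
    using w g c by (simp add: smult_r_distr smult_assoc1)
  moreover have "c \<odot>\<^bsub>M\<^esub> (a \<odot>\<^bsub>M\<^esub> g \<oplus>\<^bsub>M\<^esub> w) \<in> N" using submoduleE(4)[OF N] w c by blast
  ultimately show "c \<otimes> a \<in> coeff_ideal R M G g N"
    unfolding coeff_ideal_def using w c by (auto intro!: bexI[of _ "c \<odot>\<^bsub>M\<^esub> w"] gen_smult)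
qed

lemma submodule_eq_if_coeff_ideal_eq:
  assumes G: "G \<subseteq> carrier M" and g: "g \<in> carrier M"
    and N: "submodule N R M" and N': "submodule N' R M" and sub: "N \<subseteq> N'"
    and N'_span: "N' \<subseteq> gen_submodule R M (insert g G)"
    and coeff: "coeff_ideal R M G g N' \<subseteq> coeff_ideal R M G g N"
    and span: "N' \<inter> gen_submodule R M G \<subseteq> N"
  shows "N' = N"
proof
  show "N' \<subseteq> N"
  proof
    fix x assume x: "x \<in> N'"
    obtain r w where r: "r \<in> carrier R" and w: "w \<in> gen_submodule R M G"
      and x_eq: "x = r \<odot>\<^bsub>M\<^esub> g \<oplus>\<^bsub>M\<^esub> w"
      using gen_submodule_insert[OF G g] x N'_span by blast
    have "r \<in> coeff_ideal R M G g N" using coeff x r w x_eq unfolding coeff_ideal_def by blast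
    then obtain w' where w': "w' \<in> gen_submodule R M G" and e: "r \<odot>\<^bsub>M\<^esub> g \<oplus>\<^bsub>M\<^esub> w' \<in> N"
      unfolding coeff_ideal_def by blast
    have wM: "w \<in> carrier M" "w' \<in> carrier M" using w w' gen_submodule_carrier[OF G] by auto
    have rg: "r \<odot>\<^bsub>M\<^esub> g \<in> carrier M" using r g by simp
    define d where "d = w \<oplus>\<^bsub>M\<^esub> \<ominus>\<^bsub>M\<^esub> w'"
    have "d \<in> gen_submodule R M G"
      unfolding d_def using w submoduleE(3)[OF gen_submodule_is_submodule[OF G] w'] by (rule gen_add)
    moreover have d_eq: "d = x \<oplus>\<^bsub>M\<^esub> \<ominus>\<^bsub>M\<^esub> (r \<odot>\<^bsub>M\<^esub> g \<oplus>\<^bsub>M\<^esub> w')"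
      unfolding d_def x_eq using wM rg
      by (metis M.add.inv_closed M.add.inv_mult_group M.add.m_assoc M.add.m_comm M.minus_closed
          M.minus_eq M.r_neg2)
    then have "d \<in> N'" using x e sub submoduleE(3,5)[OF N'] by blast
    ultimately have "d \<in> N" using span by blast
    moreover have "x = d \<oplus>\<^bsub>M\<^esub> (r \<odot>\<^bsub>M\<^esub> g \<oplus>\<^bsub>M\<^esub> w')"
      unfolding d_eq using x_eq wM rg by (simp add: M.a_assoc M.l_neg)
    ultimately show "x \<in> N" using e submoduleE(5)[OF N] by simp
  qed
qed (rule sub)

text \<open>Induction on the generators: first maximize the ideal of coefficients of the new
  generator, then, among the submodules attaining it, the part inside the span of the others.\<close>
lemma gen_submodule_family_has_maximal:
  assumes noeth: "noetherian_ring R" and fin: "finite G"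
  shows "G \<subseteq> carrier M \<Longrightarrow> Fam \<noteq> {} \<Longrightarrow>
    (\<And>N. N \<in> Fam \<Longrightarrow> submodule N R M \<and> N \<subseteq> gen_submodule R M G) \<Longrightarrow>
    \<exists>N\<in>Fam. \<forall>N'\<in>Fam. N \<subseteq> N' \<longrightarrow> N' = N"
  using fin
proof (induction G arbitrary: Fam rule: finite_induct)
  case empty
  have "N = {\<zero>\<^bsub>M\<^esub>}" if "N \<in> Fam" for N
    using empty.prems(3)[OF that] submodule_zero_closed[of N] unfolding gen_submodule_empty by blast
  then show ?case using empty.prems(2) by blast
next
  case (insert g G)
  have G: "G \<subseteq> carrier M" and g: "g \<in> carrier M" using insert.prems(1) by auto
  let ?I = "coeff_ideal R M G g" and ?span = "gen_submodule R M G"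
  have "\<And>N. N \<in> Fam \<Longrightarrow> ideal (?I N) R" using insert.prems(3) coeff_ideal_ideal[OF G g] by blast
  then obtain N1 where N1: "N1 \<in> Fam" and N1max: "\<forall>N\<in>Fam. ?I N1 \<subseteq> ?I N \<longrightarrow> ?I N = ?I N1"
    using noetherian_ring.ideal_family_has_maximal_image[OF noeth insert.prems(2), where f = ?I] by blast
  define Fam' where "Fam' = {N \<in> Fam. ?I N = ?I N1}"
  have "(\<lambda>N. N \<inter> ?span) ` Fam' \<noteq> {}" using N1 unfolding Fam'_def by blast
  moreover have "submodule (N \<inter> ?span) R M \<and> N \<inter> ?span \<subseteq> ?span" if "N \<in> Fam'" for N
    using that insert.prems(3) submodule_Int[OF _ gen_submodule_is_submodule[OF G]]
    unfolding Fam'_def by blast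
  ultimately obtain K where "K \<in> (\<lambda>N. N \<inter> ?span) ` Fam'"
    and Kmax: "\<forall>K'\<in>(\<lambda>N. N \<inter> ?span) ` Fam'. K \<subseteq> K' \<longrightarrow> K' = K"
    using insert.IH[OF G, of "(\<lambda>N. N \<inter> ?span) ` Fam'"] by blast
  then obtain N2 where N2: "N2 \<in> Fam'" and K: "K = N2 \<inter> ?span" by blast
  show ?case
  proof (intro bexI ballI impI)
    show "N2 \<in> Fam" using N2 unfolding Fam'_def by blast
    fix N' assume N': "N' \<in> Fam" and sub: "N2 \<subseteq> N'"
    have "?I N2 \<subseteq> ?I N'" using sub unfolding coeff_ideal_def by blast
    then have "?I N' = ?I N1" using N1max N' N2 unfolding Fam'_def by blast
    then have "N' \<in> Fam'" using N' unfolding Fam'_def by blast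
    then have "N' \<inter> ?span \<in> (\<lambda>N. N \<inter> ?span) ` Fam'" by (rule imageI)
    then have "N' \<inter> ?span = N2 \<inter> ?span" using Kmax sub unfolding K by blast
    moreover have "?I N' = ?I N2" using \<open>?I N' = ?I N1\<close> N2 unfolding Fam'_def by simp
    moreover have "submodule N2 R M" "submodule N' R M" "N' \<subseteq> gen_submodule R M (insert g G)"
      using insert.prems(3) N' N2 unfolding Fam'_def by auto
    ultimately show "N' = N2"
      using submodule_eq_if_coeff_ideal_eq[OF G g _ _ sub] by blast
  qed
qed

lemma fin_gen_submodule_family_has_maximal:
  assumes "noetherian_ring R" and "fin_gen_module R M"
    and "Fam \<noteq> {}" and "\<And>N. N \<in> Fam \<Longrightarrow> submodule N R M"
  shows "\<exists>N\<in>Fam. \<forall>N'\<in>Fam. N \<subseteq> N' \<longrightarrow> N' = N"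
proof -
  obtain G where G: "finite G" "G \<subseteq> carrier M" and span: "gen_submodule R M G = carrier M"
    using fin_gen_module_imp_gen_submodule[OF assms(2)] .
  have "submodule N R M \<and> N \<subseteq> gen_submodule R M G" if "N \<in> Fam" for N
    using assms(4)[OF that] submoduleE(1) unfolding span by blast
  then show ?thesis
    using gen_submodule_family_has_maximal[OF assms(1) G(1) G(2) assms(3)] by blast
qed

end

section \<open>Finiteness of associated primes\<close>

definition plus_cyclic :: "('a, 'r) ring_scheme \<Rightarrow> ('a, 'b, 'm) module_scheme \<Rightarrow> 'b set \<Rightarrow> 'b \<Rightarrow> 'b set"
  where "plus_cyclic R M N y = {n \<oplus>\<^bsub>M\<^esub> r \<odot>\<^bsub>M\<^esub> y | n r. n \<in> N \<and> r \<in> carrier R}"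

context module
begin

lemma submodule_add_cancel:
  assumes N: "submodule N R M" and u: "u \<in> N" and v: "v \<in> carrier M" and uv: "u \<oplus>\<^bsub>M\<^esub> v \<in> N"
  shows "v \<in> N"
proof -
  have "u \<in> carrier M" using u submoduleE(1)[OF N] by blast
  then have "v = \<ominus>\<^bsub>M\<^esub> u \<oplus>\<^bsub>M\<^esub> (u \<oplus>\<^bsub>M\<^esub> v)"
    using v by (simp add: M.a_assoc[symmetric] M.l_neg)
  then show ?thesis using submoduleE(3,5)[OF N] u uv by metis
qed

lemma colon_add_submodule:
  assumes N: "submodule N R M" and n: "n \<in> N" and z: "z \<in> carrier M"
  shows "colon R M N (n \<oplus>\<^bsub>M\<^esub> z) = colon R M N z"
proof -
  have nM: "n \<in> carrier M" using n submoduleE(1)[OF N] by blast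
  have "a \<odot>\<^bsub>M\<^esub> (n \<oplus>\<^bsub>M\<^esub> z) \<in> N \<longleftrightarrow> a \<odot>\<^bsub>M\<^esub> z \<in> N" if a: "a \<in> carrier R" for a
  proof -
    have an: "a \<odot>\<^bsub>M\<^esub> n \<in> N" using submoduleE(4)[OF N a n] .
    have "a \<odot>\<^bsub>M\<^esub> (n \<oplus>\<^bsub>M\<^esub> z) = a \<odot>\<^bsub>M\<^esub> n \<oplus>\<^bsub>M\<^esub> a \<odot>\<^bsub>M\<^esub> z"
      using a nM z by (simp add: smult_r_distr)
    then show ?thesis
      using an submodule_add_cancel[OF N an] submoduleE(5)[OF N an] a z by auto
  qed
  then show ?thesis unfolding colon_def by blast
qed

lemma submodule_plus_cyclic:
  assumes N: "submodule N R M" and y: "y \<in> carrier M"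
  shows "submodule (plus_cyclic R M N y) R M"
proof (rule submoduleI)
  have NM: "N \<subseteq> carrier M" using submoduleE(1)[OF N] .
  show "plus_cyclic R M N y \<subseteq> carrier M" unfolding plus_cyclic_def using NM y by auto
  have "\<zero>\<^bsub>M\<^esub> = \<zero>\<^bsub>M\<^esub> \<oplus>\<^bsub>M\<^esub> \<zero> \<odot>\<^bsub>M\<^esub> y" using y by simp
  then show "\<zero>\<^bsub>M\<^esub> \<in> plus_cyclic R M N y"
    unfolding plus_cyclic_def using submodule_zero_closed[OF N] by blast
  fix a assume "a \<in> plus_cyclic R M N y"
  then obtain n r where a: "a = n \<oplus>\<^bsub>M\<^esub> r \<odot>\<^bsub>M\<^esub> y" and n: "n \<in> N" and r: "r \<in> carrier R"
    unfolding plus_cyclic_def by blast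
  have "\<ominus>\<^bsub>M\<^esub> a = \<ominus>\<^bsub>M\<^esub> n \<oplus>\<^bsub>M\<^esub> (\<ominus> r) \<odot>\<^bsub>M\<^esub> y"
    using a n r y NM by (auto simp: M.minus_add smult_l_minus)
  then show "\<ominus>\<^bsub>M\<^esub> a \<in> plus_cyclic R M N y"
    unfolding plus_cyclic_def using submoduleE(3)[OF N n] r by blast
next
  have NM: "N \<subseteq> carrier M" using submoduleE(1)[OF N] .
  fix a b assume "a \<in> plus_cyclic R M N y" "b \<in> plus_cyclic R M N y"
  then obtain n1 r1 n2 r2 where ab: "a = n1 \<oplus>\<^bsub>M\<^esub> r1 \<odot>\<^bsub>M\<^esub> y" "b = n2 \<oplus>\<^bsub>M\<^esub> r2 \<odot>\<^bsub>M\<^esub> y"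
    and n: "n1 \<in> N" "n2 \<in> N" and r: "r1 \<in> carrier R" "r2 \<in> carrier R"
    unfolding plus_cyclic_def by blast
  have "n1 \<in> carrier M" "n2 \<in> carrier M" using n NM by auto
  then have "a \<oplus>\<^bsub>M\<^esub> b = (n1 \<oplus>\<^bsub>M\<^esub> n2) \<oplus>\<^bsub>M\<^esub> (r1 \<oplus> r2) \<odot>\<^bsub>M\<^esub> y"
    using ab r y by (simp add: smult_l_distr M.a_ac)
  then show "a \<oplus>\<^bsub>M\<^esub> b \<in> plus_cyclic R M N y"
    unfolding plus_cyclic_def using submoduleE(5)[OF N n] r by blast
next
  have NM: "N \<subseteq> carrier M" using submoduleE(1)[OF N] .
  fix c a assume c: "c \<in> carrier R" and "a \<in> plus_cyclic R M N y"
  then obtain n r where a: "a = n \<oplus>\<^bsub>M\<^esub> r \<odot>\<^bsub>M\<^esub> y" and n: "n \<in> N" and r: "r \<in> carrier R"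
    unfolding plus_cyclic_def by blast
  have "c \<odot>\<^bsub>M\<^esub> a = c \<odot>\<^bsub>M\<^esub> n \<oplus>\<^bsub>M\<^esub> (c \<otimes> r) \<odot>\<^bsub>M\<^esub> y"
    using a n r c y NM by (auto simp: smult_r_distr smult_assoc1)
  then show "c \<odot>\<^bsub>M\<^esub> a \<in> plus_cyclic R M N y"
    unfolding plus_cyclic_def using submoduleE(4)[OF N c n] c r by blast
qed

lemma subset_plus_cyclic:
  assumes N: "submodule N R M" and y: "y \<in> carrier M"
  shows "N \<subseteq> plus_cyclic R M N y" and "y \<in> plus_cyclic R M N y"
proof -
  show "N \<subseteq> plus_cyclic R M N y"
  proof
    fix n assume n: "n \<in> N"
    then have "n = n \<oplus>\<^bsub>M\<^esub> \<zero> \<odot>\<^bsub>M\<^esub> y" using submoduleE(1)[OF N] y by auto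
    then show "n \<in> plus_cyclic R M N y" unfolding plus_cyclic_def using n by blast
  qed
  have "y = \<zero>\<^bsub>M\<^esub> \<oplus>\<^bsub>M\<^esub> \<one> \<odot>\<^bsub>M\<^esub> y" using y by simp
  then show "y \<in> plus_cyclic R M N y"
    unfolding plus_cyclic_def using submodule_zero_closed[OF N] by blast
qed

text \<open>\<open>Ry/(Ry \<inter> N) \<cong> R/(N : y)\<close> has \<open>(N : y)\<close> as its only associated prime.\<close>
lemma colon_plus_cyclic_primeideal:
  assumes N: "submodule N R M" and y: "y \<in> carrier M" and P: "primeideal (colon R M N y) R"
    and z: "z \<in> plus_cyclic R M N y" and prime: "primeideal (colon R M N z) R"
  shows "colon R M N z = colon R M N y"
proof -
  obtain n r where z_eq: "z = n \<oplus>\<^bsub>M\<^esub> r \<odot>\<^bsub>M\<^esub> y" and n: "n \<in> N" and r: "r \<in> carrier R"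
    using z unfolding plus_cyclic_def by blast
  have colon_z: "colon R M N z = colon R M N (r \<odot>\<^bsub>M\<^esub> y)"
    unfolding z_eq using colon_add_submodule[OF N n] r y by simp
  have "r \<notin> colon R M N y"
  proof
    assume "r \<in> colon R M N y"
    then have "colon R M N (r \<odot>\<^bsub>M\<^esub> y) = carrier R"
      using r y ideal.I_l_closed[OF primeideal.axioms(1)[OF P]] by (auto simp: colon_smult)
    then show False using primeideal.I_notcarr[OF prime] colon_z by simp
  qed
  then show ?thesis using colon_z colon_smult_primeideal[OF P _ y] r by simp
qed

lemma ass_primes_subset_plus_cyclic:
  assumes N: "submodule N R M" and y: "y \<in> carrier M" and P: "primeideal (colon R M N y) R"
  shows "ass_primes R M N \<subseteq> ass_primes R M (plus_cyclic R M N y) \<union> {colon R M N y}"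
proof
  fix Q assume "Q \<in> ass_primes R M N"
  then obtain z where Q: "primeideal Q R" and z: "z \<in> carrier M" and Q_eq: "Q = colon R M N z"
    unfolding ass_primes_def by blast
  show "Q \<in> ass_primes R M (plus_cyclic R M N y) \<union> {colon R M N y}"
  proof (cases "colon R M (plus_cyclic R M N y) z = Q")
    case True
    then show ?thesis using Q z unfolding ass_primes_def by auto
  next
    case False
    moreover have "Q \<subseteq> colon R M (plus_cyclic R M N y) z"
      unfolding Q_eq colon_def using subset_plus_cyclic(1)[OF N y] by blast
    ultimately obtain b where b: "b \<in> colon R M (plus_cyclic R M N y) z" "b \<notin> Q" by blast
    then have bR: "b \<in> carrier R" and bz: "b \<odot>\<^bsub>M\<^esub> z \<in> plus_cyclic R M N y"
      unfolding colon_def by auto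
    have "colon R M N (b \<odot>\<^bsub>M\<^esub> z) = Q"
      using colon_smult_primeideal[of N z b] Q Q_eq b bR z by simp
    then show ?thesis using colon_plus_cyclic_primeideal[OF N y P bz] Q by simp
  qed
qed

lemma finite_ass_primes:
  assumes noeth: "noetherian_ring R" and fg: "fin_gen_module R M" and N0: "submodule N0 R M"
  shows "finite (ass_primes R M N0)"
proof (rule ccontr)
  define Fam where "Fam = {N. submodule N R M \<and> infinite (ass_primes R M N)}"
  assume "infinite (ass_primes R M N0)"
  then have "N0 \<in> Fam" unfolding Fam_def using N0 by blast
  then obtain N where "N \<in> Fam" and Nmax: "\<forall>N'\<in>Fam. N \<subseteq> N' \<longrightarrow> N' = N"
    using fin_gen_submodule_family_has_maximal[OF noeth fg, of Fam] unfolding Fam_def by blast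
  then have N: "submodule N R M" and inf: "infinite (ass_primes R M N)" unfolding Fam_def by auto
  then obtain P where "P \<in> ass_primes R M N" by (metis ex_in_conv finite.emptyI)
  then obtain y where y: "y \<in> carrier M" and P: "primeideal (colon R M N y) R"
    unfolding ass_primes_def by blast
  have "y \<notin> N" using P y submoduleE(4)[OF N] primeideal.I_notcarr[OF P] unfolding colon_def by auto
  then have "plus_cyclic R M N y \<notin> Fam" using Nmax subset_plus_cyclic[OF N y] by blast
  then have "finite (ass_primes R M (plus_cyclic R M N y))"
    unfolding Fam_def using submodule_plus_cyclic[OF N y] by blast
  then have "finite (ass_primes R M N)"
    using ass_primes_subset_plus_cyclic[OF N y P] by (auto intro: finite_subset)
  then show False using inf by blast
qed

end

section \<open>Localization at a prime\<close>

definition loc_rep :: "('a, 'r) ring_scheme \<Rightarrow> ('a, 'b, 'm) module_scheme \<Rightarrow> 'a set \<Rightarrow> ('b \<times> 'a) set \<Rightarrow> 'b \<times> 'a"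
  where "loc_rep R M P c =
    (SOME z. z \<in> carrier M \<times> (carrier R - P) \<and> c = loc_rel R M (carrier R - P) `` {z})"

lemma loc_rep:
  assumes "c \<in> localization R M P"
  shows "loc_rep R M P c \<in> carrier M \<times> (carrier R - P)"
    and "c = loc_rel R M (carrier R - P) `` {loc_rep R M P c}"
proof -
  have "\<exists>z. z \<in> carrier M \<times> (carrier R - P) \<and> c = loc_rel R M (carrier R - P) `` {z}"
    using assms unfolding localization_def quotient_def by blast
  then have "loc_rep R M P c \<in> carrier M \<times> (carrier R - P) \<and>
      c = loc_rel R M (carrier R - P) `` {loc_rep R M P c}"
    unfolding loc_rep_def by (rule someI_ex)
  then show "loc_rep R M P c \<in> carrier M \<times> (carrier R - P)"
    and "c = loc_rel R M (carrier R - P) `` {loc_rep R M P c}" by blast+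
qed

text \<open>\<open>loc_eq R M P x y\<close> says that \<open>x/1 = y/1\<close> in \<open>M\<^sub>P\<close>.\<close>
definition loc_eq :: "('a, 'r) ring_scheme \<Rightarrow> ('a, 'b, 'm) module_scheme \<Rightarrow> 'a set \<Rightarrow> 'b \<Rightarrow> 'b \<Rightarrow> bool"
  where "loc_eq R M P x y \<longleftrightarrow> (\<exists>u\<in>carrier R - P. u \<odot>\<^bsub>M\<^esub> x = u \<odot>\<^bsub>M\<^esub> y)"

context module
begin

lemma smult_diff_eq_zero_iff:
  assumes "u \<in> carrier R" and "x \<in> carrier M" and "y \<in> carrier M"
  shows "u \<odot>\<^bsub>M\<^esub> (x \<ominus>\<^bsub>M\<^esub> y) = \<zero>\<^bsub>M\<^esub> \<longleftrightarrow> u \<odot>\<^bsub>M\<^esub> x = u \<odot>\<^bsub>M\<^esub> y"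
proof -
  have "u \<odot>\<^bsub>M\<^esub> (x \<ominus>\<^bsub>M\<^esub> y) = u \<odot>\<^bsub>M\<^esub> x \<ominus>\<^bsub>M\<^esub> u \<odot>\<^bsub>M\<^esub> y"
    using assms by (simp add: M.minus_eq smult_r_distr smult_r_minus)
  moreover have "a \<ominus>\<^bsub>M\<^esub> b = \<zero>\<^bsub>M\<^esub> \<longleftrightarrow> a = b" if "a \<in> carrier M" "b \<in> carrier M" for a b
    using that by (metis M.add.inv_closed M.add.inv_solve_right M.l_zero M.minus_eq M.r_neg M.zero_closed)
  ultimately show ?thesis using assms by simp
qed

lemma smult_left_commute:
  assumes "a \<in> carrier R" and "b \<in> carrier R" and "x \<in> carrier M"
  shows "a \<odot>\<^bsub>M\<^esub> (b \<odot>\<^bsub>M\<^esub> x) = b \<odot>\<^bsub>M\<^esub> (a \<odot>\<^bsub>M\<^esub> x)"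
  using assms by (simp add: smult_assoc1[symmetric] m_comm)

lemma loc_eq_iff_colon:
  assumes "x \<in> carrier M" and "y \<in> carrier M"
  shows "loc_eq R M P x y \<longleftrightarrow> \<not> colon R M {\<zero>\<^bsub>M\<^esub>} (x \<ominus>\<^bsub>M\<^esub> y) \<subseteq> P"
  using assms smult_diff_eq_zero_iff unfolding loc_eq_def colon_def by auto

lemma loc_eq_refl:
  assumes "primeideal P R"
  shows "loc_eq R M P x x"
  using primeideal_compl_multiplicative[OF assms] unfolding loc_eq_def multiplicative_subset_def by blast

lemma loc_eq_sym: "loc_eq R M P x y \<Longrightarrow> loc_eq R M P y x"
  unfolding loc_eq_def by metis

lemma loc_eq_trans:
  assumes P: "primeideal P R" and x: "x \<in> carrier M" and y: "y \<in> carrier M" and z: "z \<in> carrier M"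
    and "loc_eq R M P x y" and "loc_eq R M P y z"
  shows "loc_eq R M P x z"
proof -
  obtain u v where u: "u \<in> carrier R - P" "u \<odot>\<^bsub>M\<^esub> x = u \<odot>\<^bsub>M\<^esub> y"
    and v: "v \<in> carrier R - P" "v \<odot>\<^bsub>M\<^esub> y = v \<odot>\<^bsub>M\<^esub> z"
    using assms(5,6) unfolding loc_eq_def by blast
  have "(v \<otimes> u) \<odot>\<^bsub>M\<^esub> x = v \<odot>\<^bsub>M\<^esub> (u \<odot>\<^bsub>M\<^esub> y)" using u v x by (simp add: smult_assoc1)
  also have "\<dots> = u \<odot>\<^bsub>M\<^esub> (v \<odot>\<^bsub>M\<^esub> z)" using u v y by (simp add: smult_left_commute)
  also have "\<dots> = (v \<otimes> u) \<odot>\<^bsub>M\<^esub> z" using u v z by (simp add: smult_assoc1 smult_left_commute)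
  finally show ?thesis
    using u v primeideal_compl_multiplicative[OF P] unfolding loc_eq_def multiplicative_subset_def
    by blast
qed

lemma loc_eq_smult:
  assumes a: "a \<in> carrier R" and x: "x \<in> carrier M" and y: "y \<in> carrier M" and "loc_eq R M P x y"
  shows "loc_eq R M P (a \<odot>\<^bsub>M\<^esub> x) (a \<odot>\<^bsub>M\<^esub> y)"
proof -
  obtain u where u: "u \<in> carrier R - P" "u \<odot>\<^bsub>M\<^esub> x = u \<odot>\<^bsub>M\<^esub> y"
    using assms(4) unfolding loc_eq_def by blast
  then have "u \<odot>\<^bsub>M\<^esub> (a \<odot>\<^bsub>M\<^esub> x) = u \<odot>\<^bsub>M\<^esub> (a \<odot>\<^bsub>M\<^esub> y)"
    using a x y by (simp add: smult_left_commute[of u a])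
  then show ?thesis using u unfolding loc_eq_def by blast
qed

lemma loc_eq_add:
  assumes P: "primeideal P R" and x: "x \<in> carrier M" "y \<in> carrier M" "x' \<in> carrier M" "y' \<in> carrier M"
    and "loc_eq R M P x y" and "loc_eq R M P x' y'"
  shows "loc_eq R M P (x \<oplus>\<^bsub>M\<^esub> x') (y \<oplus>\<^bsub>M\<^esub> y')"
proof -
  obtain u v where u: "u \<in> carrier R - P" "u \<odot>\<^bsub>M\<^esub> x = u \<odot>\<^bsub>M\<^esub> y"
    and v: "v \<in> carrier R - P" "v \<odot>\<^bsub>M\<^esub> x' = v \<odot>\<^bsub>M\<^esub> y'"
    using assms(6,7) unfolding loc_eq_def by blast
  have "(u \<otimes> v) \<odot>\<^bsub>M\<^esub> (x \<oplus>\<^bsub>M\<^esub> x') = v \<odot>\<^bsub>M\<^esub> (u \<odot>\<^bsub>M\<^esub> x) \<oplus>\<^bsub>M\<^esub> u \<odot>\<^bsub>M\<^esub> (v \<odot>\<^bsub>M\<^esub> x')"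
    using u v x by (simp add: smult_r_distr smult_assoc1 smult_left_commute[of u v])
  also have "\<dots> = (u \<otimes> v) \<odot>\<^bsub>M\<^esub> (y \<oplus>\<^bsub>M\<^esub> y')"
    using u v x by (simp add: smult_r_distr smult_assoc1 smult_left_commute[of u v])
  finally show ?thesis
    using u v primeideal_compl_multiplicative[OF P] unfolding loc_eq_def multiplicative_subset_def
    by blast
qed

lemma loc_eq_cancel:
  assumes P: "primeideal P R" and c: "c \<in> carrier R - P" and "x \<in> carrier M" "y \<in> carrier M"
    and "loc_eq R M P (c \<odot>\<^bsub>M\<^esub> x) (c \<odot>\<^bsub>M\<^esub> y)"
  shows "loc_eq R M P x y"
proof -
  obtain u where u: "u \<in> carrier R - P" "u \<odot>\<^bsub>M\<^esub> (c \<odot>\<^bsub>M\<^esub> x) = u \<odot>\<^bsub>M\<^esub> (c \<odot>\<^bsub>M\<^esub> y)"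
    using assms(5) unfolding loc_eq_def by blast
  then have "(u \<otimes> c) \<odot>\<^bsub>M\<^esub> x = (u \<otimes> c) \<odot>\<^bsub>M\<^esub> y" using c assms(3,4) by (simp add: smult_assoc1)
  then show ?thesis
    using u c primeideal_compl_multiplicative[OF P] unfolding loc_eq_def multiplicative_subset_def
    by blast
qed

lemma loc_rel_iff_loc_eq:
  "((x, t), (x', t')) \<in> loc_rel R M (carrier R - P) \<longleftrightarrow>
     x \<in> carrier M \<and> t \<in> carrier R - P \<and> x' \<in> carrier M \<and> t' \<in> carrier R - P \<and>
     loc_eq R M P (t' \<odot>\<^bsub>M\<^esub> x) (t \<odot>\<^bsub>M\<^esub> x')"
  unfolding loc_rel_def loc_eq_def using smult_diff_eq_zero_iff by auto

lemma loc_eq_fraction_trans: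
  assumes P: "primeideal P R"
    and x: "x1 \<in> carrier M" "x2 \<in> carrier M" "x3 \<in> carrier M"
    and t: "t1 \<in> carrier R - P" "t2 \<in> carrier R - P" "t3 \<in> carrier R - P"
    and eq12: "loc_eq R M P (t2 \<odot>\<^bsub>M\<^esub> x1) (t1 \<odot>\<^bsub>M\<^esub> x2)"
    and eq23: "loc_eq R M P (t3 \<odot>\<^bsub>M\<^esub> x2) (t2 \<odot>\<^bsub>M\<^esub> x3)"
  shows "loc_eq R M P (t3 \<odot>\<^bsub>M\<^esub> x1) (t1 \<odot>\<^bsub>M\<^esub> x3)"
proof -
  have "loc_eq R M P (t3 \<odot>\<^bsub>M\<^esub> (t2 \<odot>\<^bsub>M\<^esub> x1)) (t3 \<odot>\<^bsub>M\<^esub> (t1 \<odot>\<^bsub>M\<^esub> x2))"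
    using loc_eq_smult eq12 x t by simp
  moreover have "t3 \<odot>\<^bsub>M\<^esub> (t1 \<odot>\<^bsub>M\<^esub> x2) = t1 \<odot>\<^bsub>M\<^esub> (t3 \<odot>\<^bsub>M\<^esub> x2)"
    using x t by (simp add: smult_left_commute)
  moreover have "loc_eq R M P (t1 \<odot>\<^bsub>M\<^esub> (t3 \<odot>\<^bsub>M\<^esub> x2)) (t1 \<odot>\<^bsub>M\<^esub> (t2 \<odot>\<^bsub>M\<^esub> x3))"
    using loc_eq_smult eq23 x t by simp
  ultimately have "loc_eq R M P (t3 \<odot>\<^bsub>M\<^esub> (t2 \<odot>\<^bsub>M\<^esub> x1)) (t1 \<odot>\<^bsub>M\<^esub> (t2 \<odot>\<^bsub>M\<^esub> x3))"
    using loc_eq_trans[OF P] x t by (metis smult_closed DiffD1)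
  moreover have "t3 \<odot>\<^bsub>M\<^esub> (t2 \<odot>\<^bsub>M\<^esub> x1) = t2 \<odot>\<^bsub>M\<^esub> (t3 \<odot>\<^bsub>M\<^esub> x1)"
    and "t1 \<odot>\<^bsub>M\<^esub> (t2 \<odot>\<^bsub>M\<^esub> x3) = t2 \<odot>\<^bsub>M\<^esub> (t1 \<odot>\<^bsub>M\<^esub> x3)"
    using x t by (simp_all add: smult_left_commute)
  ultimately show ?thesis using loc_eq_cancel[OF P t(2)] x t by simp
qed

lemma loc_rel_equiv:
  assumes P: "primeideal P R"
  shows "equiv (carrier M \<times> (carrier R - P)) (loc_rel R M (carrier R - P))"
proof (rule equivI)
  show "loc_rel R M (carrier R - P) \<subseteq> (carrier M \<times> (carrier R - P)) \<times> (carrier M \<times> (carrier R - P))"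
    unfolding loc_rel_def by blast
  show "refl_on (carrier M \<times> (carrier R - P)) (loc_rel R M (carrier R - P))"
  proof (rule refl_onI)
    fix z assume "z \<in> carrier M \<times> (carrier R - P)"
    then show "(z, z) \<in> loc_rel R M (carrier R - P)"
      using loc_eq_refl[OF P] by (cases z) (simp add: loc_rel_iff_loc_eq)
  qed
  show "sym (loc_rel R M (carrier R - P))"
  proof (rule symI)
    fix a b assume "(a, b) \<in> loc_rel R M (carrier R - P)"
    then show "(b, a) \<in> loc_rel R M (carrier R - P)"
      using loc_eq_sym by (cases a, cases b) (simp add: loc_rel_iff_loc_eq)
  qed
  show "trans (loc_rel R M (carrier R - P))"
  proof (rule transI)
    fix a b c assume "(a, b) \<in> loc_rel R M (carrier R - P)" "(b, c) \<in> loc_rel R M (carrier R - P)"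
    moreover obtain x1 t1 x2 t2 x3 t3 where abc: "a = (x1, t1)" "b = (x2, t2)" "c = (x3, t3)"
      by (cases a, cases b, cases c) auto
    ultimately have x: "x1 \<in> carrier M" "x2 \<in> carrier M" "x3 \<in> carrier M"
      and t: "t1 \<in> carrier R - P" "t2 \<in> carrier R - P" "t3 \<in> carrier R - P"
      and eq12: "loc_eq R M P (t2 \<odot>\<^bsub>M\<^esub> x1) (t1 \<odot>\<^bsub>M\<^esub> x2)"
      and eq23: "loc_eq R M P (t3 \<odot>\<^bsub>M\<^esub> x2) (t2 \<odot>\<^bsub>M\<^esub> x3)"
      by (simp_all add: loc_rel_iff_loc_eq)
    have "loc_eq R M P (t3 \<odot>\<^bsub>M\<^esub> x1) (t1 \<odot>\<^bsub>M\<^esub> x3)"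
      using loc_eq_fraction_trans[OF P x t eq12 eq23] .
    then show "(a, c) \<in> loc_rel R M (carrier R - P)" using abc x t by (simp add: loc_rel_iff_loc_eq)
  qed
qed

lemma loc_restrict_class:
  assumes P: "primeideal P R" and Q: "primeideal Q R" and PQ: "P \<subseteq> Q"
    and z: "z \<in> carrier M \<times> (carrier R - Q)"
  shows "loc_restrict R M P (loc_rel R M (carrier R - Q) `` {z}) = loc_rel R M (carrier R - P) `` {z}"
proof
  show "loc_restrict R M P (loc_rel R M (carrier R - Q) `` {z}) \<subseteq> loc_rel R M (carrier R - P) `` {z}"
  proof
    fix w assume "w \<in> loc_restrict R M P (loc_rel R M (carrier R - Q) `` {z})"
    then obtain v where zv: "(z, v) \<in> loc_rel R M (carrier R - Q)" and vw: "(v, w) \<in> loc_rel R M (carrier R - P)"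
      unfolding loc_restrict_def by blast
    have "(z, v) \<in> loc_rel R M (carrier R - P)" using zv PQ unfolding loc_rel_def by blast
    then have "(z, w) \<in> loc_rel R M (carrier R - P)"
      using vw loc_rel_equiv[OF P] unfolding equiv_def by (blast dest: transD)
    then show "w \<in> loc_rel R M (carrier R - P) `` {z}" by blast
  qed
  show "loc_rel R M (carrier R - P) `` {z} \<subseteq> loc_restrict R M P (loc_rel R M (carrier R - Q) `` {z})"
    using equiv_class_self[OF loc_rel_equiv[OF Q] z] unfolding loc_restrict_def by blast
qed

lemma loc_map_eq_iff_loc_rep:
  assumes P: "primeideal P R" and v: "v \<in> carrier M" and c: "c \<in> localization R M P"
  shows "loc_map R M P v = c \<longleftrightarrow>
    loc_eq R M P (snd (loc_rep R M P c) \<odot>\<^bsub>M\<^esub> v) (fst (loc_rep R M P c))"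
proof -
  obtain x t where rep: "loc_rep R M P c = (x, t)" by fastforce
  have one: "\<one> \<in> carrier R - P"
    using primeideal_compl_multiplicative[OF P] unfolding multiplicative_subset_def by blast
  have "loc_map R M P v = c \<longleftrightarrow> ((v, \<one>), (x, t)) \<in> loc_rel R M (carrier R - P)"
    using eq_equiv_class_iff[OF loc_rel_equiv[OF P]] loc_rep[OF c] v one
    unfolding loc_map_def rep by auto
  then show ?thesis using loc_rep(1)[OF c] v one unfolding rep by (simp add: loc_rel_iff_loc_eq)
qed

lemma loc_rep_compatible:
  assumes P: "primeideal P R" and Q: "primeideal Q R" and PQ: "P \<subseteq> Q"
    and c: "c \<in> localization R M P" and d: "d \<in> localization R M Q"
    and restrict: "c = loc_restrict R M P d"
  shows "loc_eq R M P (snd (loc_rep R M Q d) \<odot>\<^bsub>M\<^esub> fst (loc_rep R M P c))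
    (snd (loc_rep R M P c) \<odot>\<^bsub>M\<^esub> fst (loc_rep R M Q d))"
proof -
  let ?rel = "loc_rel R M (carrier R - P)"
  obtain x t where x: "loc_rep R M P c = (x, t)" by fastforce
  obtain x' t' where x': "loc_rep R M Q d = (x', t')" by fastforce
  have "?rel `` {(x, t)} = loc_restrict R M P (loc_rel R M (carrier R - Q) `` {(x', t')})"
    using restrict loc_rep(2)[OF c] loc_rep(2)[OF d] unfolding x x' by simp
  also have "\<dots> = ?rel `` {(x', t')}"
    using loc_restrict_class[OF P Q PQ] loc_rep(1)[OF d] unfolding x' by blast
  finally have classes: "?rel `` {(x, t)} = ?rel `` {(x', t')}" .
  have "(x', t') \<in> carrier M \<times> (carrier R - P)" using loc_rep(1)[OF d] PQ unfolding x' by blast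
  then have "((x, t), (x', t')) \<in> ?rel"
    using classes eq_equiv_class_iff[OF loc_rel_equiv[OF P]] loc_rep(1)[OF c] unfolding x by simp
  then show ?thesis unfolding x x' by (simp add: loc_rel_iff_loc_eq)
qed

lemma loc_eq_if_loc_eq_at_ass_primes:
  assumes noeth: "noetherian_ring R" and p: "primeideal p R"
    and x: "x \<in> carrier M" and y: "y \<in> carrier M"
    and ass: "\<And>Q. Q \<in> ass_primes R M {\<zero>\<^bsub>M\<^esub>} \<Longrightarrow> Q \<subseteq> p \<Longrightarrow> loc_eq R M Q x y"
  shows "loc_eq R M p x y"
proof (rule ccontr)
  assume "\<not> loc_eq R M p x y"
  then have "colon R M {\<zero>\<^bsub>M\<^esub>} (x \<ominus>\<^bsub>M\<^esub> y) \<inter> (carrier R - p) = {}"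
    using loc_eq_iff_colon[OF x y] unfolding colon_def by blast
  then obtain Q where Q: "Q \<in> ass_primes R M {\<zero>\<^bsub>M\<^esub>}" and disj: "Q \<inter> (carrier R - p) = {}"
    and colon: "colon R M {\<zero>\<^bsub>M\<^esub>} (x \<ominus>\<^bsub>M\<^esub> y) \<subseteq> Q"
    using ex_ass_prime_disjoint[OF noeth zero_submodule primeideal_compl_multiplicative[OF p]] x y
    by blast
  have "Q \<subseteq> carrier R" using Q unfolding ass_primes_def colon_def by blast
  then have "Q \<subseteq> p" using disj by blast
  then show False using ass[OF Q] colon loc_eq_iff_colon[OF x y] by blast
qed

lemma eq_if_loc_eq_at_primes:
  assumes noeth: "noetherian_ring R" and x: "x \<in> carrier M" and y: "y \<in> carrier M"
    and loc: "\<And>P. primeideal P R \<Longrightarrow> loc_eq R M P x y"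
  shows "x = y"
proof -
  let ?I = "colon R M {\<zero>\<^bsub>M\<^esub>} (x \<ominus>\<^bsub>M\<^esub> y)"
  have "\<one> \<in> ?I"
  proof (rule ccontr)
    assume "\<one> \<notin> ?I"
    then obtain P where "primeideal P R" "?I \<subseteq> P"
      using ex_primeideal_superset[OF noeth colon_ideal[OF zero_submodule]] x y by blast
    then show False using loc loc_eq_iff_colon[OF x y] by blast
  qed
  then show ?thesis using smult_diff_eq_zero_iff[of \<one>] x y unfolding colon_def by simp
qed

end

section \<open>Gluing compatible fractions\<close>

text \<open>Representatives \<open>x P / t P\<close> of a family of elements of the localizations \<open>M\<^sub>P\<close> that is
  compatible under generization.\<close>
locale compatible_fractions = module R M
  for R :: "('a, 'r) ring_scheme" (structure) and M :: "('a, 'b, 'm) module_scheme" (structure) +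
  fixes x :: "'a set \<Rightarrow> 'b" and t :: "'a set \<Rightarrow> 'a"
  assumes noetherian: "noetherian_ring R" and fin_gen: "fin_gen_module R M"
    and numer_closed: "primeideal P R \<Longrightarrow> x P \<in> carrier M"
    and denom_closed: "primeideal P R \<Longrightarrow> t P \<in> carrier R - P"
    and compatible: "\<lbrakk>primeideal P R; primeideal Q R; P \<subseteq> Q\<rbrakk> \<Longrightarrow>
      loc_eq R M P (t Q \<odot>\<^bsub>M\<^esub> x P) (t P \<odot>\<^bsub>M\<^esub> x Q)"
begin

definition gluing_ideal :: "'a set" where
  "gluing_ideal = {a \<in> carrier R. \<exists>v\<in>carrier M. \<forall>P. primeideal P R \<longrightarrow>
     loc_eq R M P (t P \<odot>\<^bsub>M\<^esub> v) (a \<odot>\<^bsub>M\<^esub> x P)}"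

lemma gluing_ideal_ideal: "ideal gluing_ideal R"
proof (rule cring_idealI)
  show "gluing_ideal \<subseteq> carrier R" unfolding gluing_ideal_def by blast
  have "loc_eq R M P (t P \<odot>\<^bsub>M\<^esub> \<zero>\<^bsub>M\<^esub>) (\<zero> \<odot>\<^bsub>M\<^esub> x P)" if "primeideal P R" for P
    using loc_eq_refl[OF that] numer_closed[OF that] denom_closed[OF that] by simp
  then show "\<zero> \<in> gluing_ideal" unfolding gluing_ideal_def by blast
next
  fix a b assume "a \<in> gluing_ideal" "b \<in> gluing_ideal"
  then obtain va vb where a: "a \<in> carrier R" "va \<in> carrier M"
    "\<And>P. primeideal P R \<Longrightarrow> loc_eq R M P (t P \<odot>\<^bsub>M\<^esub> va) (a \<odot>\<^bsub>M\<^esub> x P)"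
    and b: "b \<in> carrier R" "vb \<in> carrier M"
    "\<And>P. primeideal P R \<Longrightarrow> loc_eq R M P (t P \<odot>\<^bsub>M\<^esub> vb) (b \<odot>\<^bsub>M\<^esub> x P)"
    unfolding gluing_ideal_def by blast
  have "loc_eq R M P (t P \<odot>\<^bsub>M\<^esub> (va \<oplus>\<^bsub>M\<^esub> vb)) ((a \<oplus> b) \<odot>\<^bsub>M\<^esub> x P)"
    if P: "primeideal P R" for P
    using loc_eq_add[OF P _ _ _ _ a(3)[OF P] b(3)[OF P]] a b numer_closed[OF P] denom_closed[OF P]
    by (simp add: smult_r_distr smult_l_distr)
  then show "a \<oplus> b \<in> gluing_ideal" unfolding gluing_ideal_def using a b by blast
next
  fix r a assume r: "r \<in> carrier R" and "a \<in> gluing_ideal"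
  then obtain va where a: "a \<in> carrier R" "va \<in> carrier M"
    "\<And>P. primeideal P R \<Longrightarrow> loc_eq R M P (t P \<odot>\<^bsub>M\<^esub> va) (a \<odot>\<^bsub>M\<^esub> x P)"
    unfolding gluing_ideal_def by blast
  have "loc_eq R M P (t P \<odot>\<^bsub>M\<^esub> (r \<odot>\<^bsub>M\<^esub> va)) ((r \<otimes> a) \<odot>\<^bsub>M\<^esub> x P)"
    if P: "primeideal P R" for P
    using loc_eq_smult[OF r _ _ a(3)[OF P]] a r numer_closed[OF P] denom_closed[OF P]
    by (simp add: smult_assoc1 smult_left_commute[of "t P" r])
  then show "r \<otimes> a \<in> gluing_ideal" unfolding gluing_ideal_def using a r by blast
qed

lemma compatible_below:
  assumes Q: "primeideal Q R" and P1: "primeideal P1 R" and P2: "primeideal P2 R"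
    and "Q \<subseteq> P1" and "Q \<subseteq> P2"
  shows "loc_eq R M Q (t P2 \<odot>\<^bsub>M\<^esub> x P1) (t P1 \<odot>\<^bsub>M\<^esub> x P2)"
proof (rule loc_eq_fraction_trans[OF Q])
  show "x P1 \<in> carrier M" "x Q \<in> carrier M" "x P2 \<in> carrier M"
    using numer_closed P1 Q P2 by auto
  show "t P1 \<in> carrier R - Q" "t Q \<in> carrier R - Q" "t P2 \<in> carrier R - Q"
    using denom_closed P1 Q P2 assms(4,5) by auto
  show "loc_eq R M Q (t Q \<odot>\<^bsub>M\<^esub> x P1) (t P1 \<odot>\<^bsub>M\<^esub> x Q)"
    using compatible[OF Q P1 assms(4)] by (rule loc_eq_sym)
  show "loc_eq R M Q (t P2 \<odot>\<^bsub>M\<^esub> x Q) (t Q \<odot>\<^bsub>M\<^esub> x P2)"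
    using compatible[OF Q P2 assms(5)] .
qed

text \<open>If there were no such \<open>b\<close>, an associated prime below both \<open>P\<close> and \<open>m\<close> would separate \<open>x m / t m\<close> from
  \<open>x P / t P\<close>, contradicting compatibility.\<close>
lemma ex_multiplier_at_ass_prime:
  assumes m: "primeideal m R" and P: "P \<in> ass_primes R M {\<zero>\<^bsub>M\<^esub>}"
  shows "\<exists>b\<in>carrier R - m. loc_eq R M P (b \<odot>\<^bsub>M\<^esub> (t P \<odot>\<^bsub>M\<^esub> x m)) (b \<odot>\<^bsub>M\<^esub> (t m \<odot>\<^bsub>M\<^esub> x P))"
proof (rule ccontr)
  assume none: "\<not> ?thesis"
  have P_prime: "primeideal P R" using P unfolding ass_primes_def by blast
  define y1 where "y1 = t P \<odot>\<^bsub>M\<^esub> x m"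
  define y2 where "y2 = t m \<odot>\<^bsub>M\<^esub> x P"
  have y: "y1 \<in> carrier M" "y2 \<in> carrier M"
    unfolding y1_def y2_def using numer_closed denom_closed m P_prime by auto
  define T where "T = {a \<otimes> c | a c. a \<in> carrier R - P \<and> c \<in> carrier R - m}"
  have T: "multiplicative_subset R T" unfolding T_def
    by (rule multiplicative_subset_products[OF primeideal_compl_multiplicative[OF P_prime]
          primeideal_compl_multiplicative[OF m]])
  have "colon R M {\<zero>\<^bsub>M\<^esub>} (y1 \<ominus>\<^bsub>M\<^esub> y2) \<inter> T = {}"
  proof -
    have False if a: "a \<in> carrier R - P" and c: "c \<in> carrier R - m"
      and ac: "(a \<otimes> c) \<odot>\<^bsub>M\<^esub> (y1 \<ominus>\<^bsub>M\<^esub> y2) = \<zero>\<^bsub>M\<^esub>" for a c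
    proof -
      have "(a \<otimes> c) \<odot>\<^bsub>M\<^esub> y1 = (a \<otimes> c) \<odot>\<^bsub>M\<^esub> y2"
        using ac a c y smult_diff_eq_zero_iff[of "a \<otimes> c" y1 y2] by simp
      then have "a \<odot>\<^bsub>M\<^esub> (c \<odot>\<^bsub>M\<^esub> y1) = a \<odot>\<^bsub>M\<^esub> (c \<odot>\<^bsub>M\<^esub> y2)"
        using a c y by (simp add: smult_assoc1)
      then have "loc_eq R M P (c \<odot>\<^bsub>M\<^esub> y1) (c \<odot>\<^bsub>M\<^esub> y2)" using a unfolding loc_eq_def by blast
      then show False using none c unfolding y1_def y2_def by blast
    qed
    then show ?thesis unfolding T_def colon_def by blast
  qed
  then obtain Q where Q: "Q \<in> ass_primes R M {\<zero>\<^bsub>M\<^esub>}" and QT: "Q \<inter> T = {}"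
    and colon: "colon R M {\<zero>\<^bsub>M\<^esub>} (y1 \<ominus>\<^bsub>M\<^esub> y2) \<subseteq> Q"
    using ex_ass_prime_disjoint[OF noetherian zero_submodule T] y by blast
  have Q_prime: "primeideal Q R" and "Q \<subseteq> carrier R" using Q unfolding ass_primes_def colon_def by auto
  then have "Q \<subseteq> P" and "Q \<subseteq> m"
    using subset_Int_if_disjoint_compl_products[OF P_prime m] QT unfolding T_def by auto
  then have "loc_eq R M Q y1 y2"
    unfolding y1_def y2_def using compatible_below[OF Q_prime m P_prime] by blast
  then show False using colon loc_eq_iff_colon[OF y] by blast
qed

lemma multiplier_in_gluing_ideal:
  assumes m: "primeideal m R" and b: "b \<in> carrier R"
    and ass: "\<And>Q. Q \<in> ass_primes R M {\<zero>\<^bsub>M\<^esub>} \<Longrightarrow>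
      loc_eq R M Q (b \<odot>\<^bsub>M\<^esub> (t Q \<odot>\<^bsub>M\<^esub> x m)) (b \<odot>\<^bsub>M\<^esub> (t m \<odot>\<^bsub>M\<^esub> x Q))"
  shows "b \<otimes> t m \<in> gluing_ideal"
proof -
  have xm: "x m \<in> carrier M" and tm: "t m \<in> carrier R" using numer_closed[OF m] denom_closed[OF m] by auto
  have "loc_eq R M p (t p \<odot>\<^bsub>M\<^esub> (b \<odot>\<^bsub>M\<^esub> x m)) ((b \<otimes> t m) \<odot>\<^bsub>M\<^esub> x p)"
    if p: "primeideal p R" for p
  proof (rule loc_eq_if_loc_eq_at_ass_primes[OF noetherian p])
    have xp: "x p \<in> carrier M" and tp: "t p \<in> carrier R" using numer_closed[OF p] denom_closed[OF p] by auto
    show "t p \<odot>\<^bsub>M\<^esub> (b \<odot>\<^bsub>M\<^esub> x m) \<in> carrier M" "(b \<otimes> t m) \<odot>\<^bsub>M\<^esub> x p \<in> carrier M"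
      using xm tm xp tp b by auto
    fix Q assume Q: "Q \<in> ass_primes R M {\<zero>\<^bsub>M\<^esub>}" and Qp: "Q \<subseteq> p"
    have Q_prime: "primeideal Q R" using Q unfolding ass_primes_def by blast
    have xQ: "x Q \<in> carrier M" and tQ: "t Q \<in> carrier R - Q"
      using numer_closed[OF Q_prime] denom_closed[OF Q_prime] by auto
    have "loc_eq R M Q (t p \<odot>\<^bsub>M\<^esub> (b \<odot>\<^bsub>M\<^esub> (t Q \<odot>\<^bsub>M\<^esub> x m))) (t p \<odot>\<^bsub>M\<^esub> (b \<odot>\<^bsub>M\<^esub> (t m \<odot>\<^bsub>M\<^esub> x Q)))"
      using loc_eq_smult[OF tp _ _ ass[OF Q]] b xm tm xQ tQ by simp
    then have l1: "loc_eq R M Q (t Q \<odot>\<^bsub>M\<^esub> (t p \<odot>\<^bsub>M\<^esub> (b \<odot>\<^bsub>M\<^esub> x m))) ((b \<otimes> t m) \<odot>\<^bsub>M\<^esub> (t p \<odot>\<^bsub>M\<^esub> x Q))"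
      using b xm tm xQ tQ tp by (simp add: smult_assoc1[symmetric] m_ac)
    have "loc_eq R M Q ((b \<otimes> t m) \<odot>\<^bsub>M\<^esub> (t p \<odot>\<^bsub>M\<^esub> x Q)) ((b \<otimes> t m) \<odot>\<^bsub>M\<^esub> (t Q \<odot>\<^bsub>M\<^esub> x p))"
      using loc_eq_smult[OF _ _ _ compatible[OF Q_prime p Qp], of "b \<otimes> t m"] b tm xQ tQ xp tp by simp
    then have l2: "loc_eq R M Q ((b \<otimes> t m) \<odot>\<^bsub>M\<^esub> (t p \<odot>\<^bsub>M\<^esub> x Q)) (t Q \<odot>\<^bsub>M\<^esub> ((b \<otimes> t m) \<odot>\<^bsub>M\<^esub> x p))"
      using b tm tQ xp by (simp add: smult_assoc1[symmetric] m_ac)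
    have "loc_eq R M Q (t Q \<odot>\<^bsub>M\<^esub> (t p \<odot>\<^bsub>M\<^esub> (b \<odot>\<^bsub>M\<^esub> x m))) (t Q \<odot>\<^bsub>M\<^esub> ((b \<otimes> t m) \<odot>\<^bsub>M\<^esub> x p))"
      using loc_eq_trans[OF Q_prime _ _ _ l1 l2] b xm tm xQ tQ xp tp by simp
    then show "loc_eq R M Q (t p \<odot>\<^bsub>M\<^esub> (b \<odot>\<^bsub>M\<^esub> x m)) ((b \<otimes> t m) \<odot>\<^bsub>M\<^esub> x p)"
      using loc_eq_cancel[OF Q_prime tQ] b xm tm xp tp by simp
  qed
  then show ?thesis unfolding gluing_ideal_def using b tm xm by blast
qed

lemma gluing_ideal_not_subset_primeideal:
  assumes m: "primeideal m R"
  shows "\<not> gluing_ideal \<subseteq> m"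
proof
  assume sub: "gluing_ideal \<subseteq> m"
  let ?G = "\<lambda>b Q. loc_eq R M Q (b \<odot>\<^bsub>M\<^esub> (t Q \<odot>\<^bsub>M\<^esub> x m)) (b \<odot>\<^bsub>M\<^esub> (t m \<odot>\<^bsub>M\<^esub> x Q))"
  have "\<exists>b\<in>carrier R - m. \<forall>Q\<in>ass_primes R M {\<zero>\<^bsub>M\<^esub>}. ?G b Q"
  proof (rule ex_common_factor_notin_primeideal[OF m])
    show "finite (ass_primes R M {\<zero>\<^bsub>M\<^esub>})"
      by (rule finite_ass_primes[OF noetherian fin_gen zero_submodule])
    show "\<exists>b\<in>carrier R - m. ?G b Q" if "Q \<in> ass_primes R M {\<zero>\<^bsub>M\<^esub>}" for Q
      by (rule ex_multiplier_at_ass_prime[OF m that])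
    fix b c Q assume Q: "Q \<in> ass_primes R M {\<zero>\<^bsub>M\<^esub>}" and G: "?G b Q"
      and b: "b \<in> carrier R" and c: "c \<in> carrier R"
    have "primeideal Q R" using Q unfolding ass_primes_def by blast
    then have "t Q \<odot>\<^bsub>M\<^esub> x m \<in> carrier M" "t m \<odot>\<^bsub>M\<^esub> x Q \<in> carrier M"
      using numer_closed denom_closed m by auto
    then show "?G (c \<otimes> b) Q" using loc_eq_smult[OF c _ _ G] b c by (simp add: smult_assoc1)
  qed
  then obtain b where b: "b \<in> carrier R - m" and G: "\<And>Q. Q \<in> ass_primes R M {\<zero>\<^bsub>M\<^esub>} \<Longrightarrow> ?G b Q"
    by blast
  have "b \<otimes> t m \<in> m" using multiplier_in_gluing_ideal[OF m _ G] b sub by blast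
  then show False using primeideal.I_prime[OF m] b denom_closed[OF m] by blast
qed

lemma one_in_gluing_ideal: "\<one> \<in> gluing_ideal"
  using ex_primeideal_superset[OF noetherian gluing_ideal_ideal] gluing_ideal_not_subset_primeideal
  by blast

lemma ex1_glued: "\<exists>!v. v \<in> carrier M \<and> (\<forall>P. primeideal P R \<longrightarrow> loc_eq R M P (t P \<odot>\<^bsub>M\<^esub> v) (x P))"
proof (rule ex_ex1I)
  show "\<exists>v. v \<in> carrier M \<and> (\<forall>P. primeideal P R \<longrightarrow> loc_eq R M P (t P \<odot>\<^bsub>M\<^esub> v) (x P))"
    using one_in_gluing_ideal numer_closed unfolding gluing_ideal_def by auto
next
  fix v w
  assume v: "v \<in> carrier M \<and> (\<forall>P. primeideal P R \<longrightarrow> loc_eq R M P (t P \<odot>\<^bsub>M\<^esub> v) (x P))"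
    and w: "w \<in> carrier M \<and> (\<forall>P. primeideal P R \<longrightarrow> loc_eq R M P (t P \<odot>\<^bsub>M\<^esub> w) (x P))"
  have "loc_eq R M P v w" if P: "primeideal P R" for P
  proof -
    have tP: "t P \<in> carrier R - P" and xP: "x P \<in> carrier M"
      using denom_closed[OF P] numer_closed[OF P] by auto
    have "loc_eq R M P (t P \<odot>\<^bsub>M\<^esub> v) (t P \<odot>\<^bsub>M\<^esub> w)"
      using loc_eq_trans[OF P _ xP _ _ loc_eq_sym] v w P tP by auto
    then show ?thesis using loc_eq_cancel[OF P tP] v w by blast
  qed
  then show "v = w" using eq_if_loc_eq_at_primes[OF noetherian] v w by blast
qed

end

theorem lemma7:
  fixes R :: "('a, 'r) ring_scheme" and M :: "('a, 'b, 'm) module_scheme"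
    and s :: "'a set \<Rightarrow> ('b \<times> 'a) set"
  assumes "noetherian_ring R" and "cring R" and "module R M" and "fin_gen_module R M"
    and "\<And>P. primeideal P R \<Longrightarrow> s P \<in> localization R M P"
    and "\<And>P Q. primeideal P R \<Longrightarrow> primeideal Q R \<Longrightarrow> P \<subseteq> Q \<Longrightarrow> s P = loc_restrict R M P (s Q)"
  shows "\<exists>!v. v \<in> carrier M \<and> (\<forall>P. primeideal P R \<longrightarrow> loc_map R M P v = s P)"
proof -
  interpret module R M by fact
  define x where "x P = fst (loc_rep R M P (s P))" for P
  define t where "t P = snd (loc_rep R M P (s P))" for P
  have "compatible_fractions R M x t"
  proof (rule compatible_fractions.intro[OF assms(3)], rule compatible_fractions_axioms.intro)
    show "noetherian_ring R" and "fin_gen_module R M" by fact+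
    show "x P \<in> carrier M" and "t P \<in> carrier R - P" if "primeideal P R" for P
      using loc_rep(1)[OF assms(5)[OF that]] unfolding x_def t_def by auto
    show "loc_eq R M P (t Q \<odot>\<^bsub>M\<^esub> x P) (t P \<odot>\<^bsub>M\<^esub> x Q)"
      if "primeideal P R" and "primeideal Q R" and "P \<subseteq> Q" for P Q
      using loc_rep_compatible[OF that assms(5)[OF that(1)] assms(5)[OF that(2)] assms(6)[OF that]]
      unfolding x_def t_def .
  qed
  then have "\<exists>!v. v \<in> carrier M \<and> (\<forall>P. primeideal P R \<longrightarrow> loc_eq R M P (t P \<odot>\<^bsub>M\<^esub> v) (x P))"
    by (rule compatible_fractions.ex1_glued)
  moreover have "loc_map R M P v = s P \<longleftrightarrow> loc_eq R M P (t P \<odot>\<^bsub>M\<^esub> v) (x P)"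
    if "primeideal P R" and "v \<in> carrier M" for P v
    using loc_map_eq_iff_loc_rep[OF that assms(5)[OF that(1)]] unfolding x_def t_def .
  ultimately show ?thesis by (smt (verit, best) ex1E ex1I)
qed

end
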